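(* Let $\mathbb{M}$ be $d$-dimensional Minkowski spacetime ($d\ge 2$) with points written $(t,\vec x)$, $t\in\mathbb{R}$, $\vec x\in\mathbb{R}^{d-1}$. Let $\mathcal{H}$ be a Hilbert space, let $U$ be a unitary representation of the additive group $\mathbb{R}^{d-1}$ on $\mathcal{H}$, and let $\hat\psi:\mathbb{M}\to\mathcal{B}(\mathcal{H})$ and $\hat\pi:\mathbb{M}\to\mathcal{B}(\mathcal{H})$ be such that (1) $U$ is weakly continuous; (2) $U(\vec y)\hat\pi(t,\vec x)U(\vec y)^\dagger=\hat\pi(t,\vec x+\vec y)$ for all $\vec x,\vec y\in\mathbb{R}^{d-1}$ and all $t\in\mathbb{R}$. Then for every $t\in\mathbb{R}$: $[\hat\psi(t,\vec x),\hat\pi(t,\vec y)]=0$ for all $\vec x\neq\vec y\in\mathbb{R}^{d-1}$ if and only if $[\hat\psi(t,\vec x),\hat\pi(t,\vec y)]=0$ for all $\vec x,\vec y\in\mathbb{R}^{d-1}$; and $\{\hat\psi(t,\vec x),\hat\pi(t,\vec y)\}=0$ for all $\vec x\neq\vec y\in\mathbb{R}^{d-1}$ if and only if $\{\hat\psi(t,\vec x),\hat\pi(t,\vec y)\}=0$ for all $\vec x,\vec y\in\mathbb{R}^{d-1}$.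
   Context: $\mathcal{B}(\mathcal{H})$ denotes the bounded operators on $\mathcal{H}$. $[A,B]=AB-BA$, $\{A,B\}=AB+BA$. *)

theory Defs
  imports "HOL-Analysis.Analysis"
begin

text \<open>A complex Hilbert space is encoded as a real Hilbert space 'h (real part of the
complex inner product) together with a compatible complex structure J (multiplication by i).
The complex inner product is recovered as inner x y + i * inner (J x) y (up to convention).\<close>

definition complex_structure :: "('h::real_inner \<Rightarrow> 'h) \<Rightarrow> bool" where
  "complex_structure J \<longleftrightarrow> linear J \<and> (\<forall>x. J (J x) = - x) \<and>
     (\<forall>x y. inner (J x) (J y) = inner x y)"

definition bounded_op :: "('h::real_inner \<Rightarrow> 'h) \<Rightarrow> ('h \<Rightarrow> 'h) \<Rightarrow> bool" where
  "bounded_op J A \<longleftrightarrow> bounded_linear A \<and> (\<forall>x. A (J x) = J (A x))"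

definition adjoint_op :: "('h::real_inner \<Rightarrow> 'h) \<Rightarrow> ('h \<Rightarrow> 'h)" where
  "adjoint_op A = (THE B. \<forall>x y. inner (A x) y = inner x (B y))"

definition unitary_op :: "('h::real_inner \<Rightarrow> 'h) \<Rightarrow> ('h \<Rightarrow> 'h) \<Rightarrow> bool" where
  "unitary_op J V \<longleftrightarrow> bounded_op J V \<and> (\<forall>x y. inner (V x) (V y) = inner x y) \<and> surj V"

definition unitary_rep :: "('h::real_inner \<Rightarrow> 'h) \<Rightarrow> ('v::ab_group_add \<Rightarrow> 'h \<Rightarrow> 'h) \<Rightarrow> bool" where
  "unitary_rep J U \<longleftrightarrow> U 0 = id \<and> (\<forall>x y. U (x + y) = U x \<circ> U y) \<and> (\<forall>x. unitary_op J (U x))"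

text \<open>Weak continuity: all matrix elements are continuous (real and imaginary parts are
covered since phi ranges over all vectors, including J phi).\<close>
definition weakly_continuous :: "('v::topological_space \<Rightarrow> 'h::real_inner \<Rightarrow> 'h) \<Rightarrow> bool" where
  "weakly_continuous U \<longleftrightarrow> (\<forall>\<phi> \<psi>. continuous_on UNIV (\<lambda>y. inner \<phi> (U y \<psi>)))"

definition commutator :: "('h::ab_group_add \<Rightarrow> 'h) \<Rightarrow> ('h \<Rightarrow> 'h) \<Rightarrow> ('h \<Rightarrow> 'h)" where
  "commutator A B = (\<lambda>v. A (B v) - B (A v))"

definition anticommutator :: "('h::ab_group_add \<Rightarrow> 'h) \<Rightarrow> ('h \<Rightarrow> 'h) \<Rightarrow> ('h \<Rightarrow> 'h)" where
  "anticommutator A B = (\<lambda>v. A (B v) + B (A v))"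

end

theory Submission imports Defs begin

text \<open>Covariance writes \<open>\<pi>(t, y)\<close> as the conjugate \<open>U(y) \<pi>(t, 0) U(y)\<^sup>\<dagger>\<close>, and a weakly
continuous unitary representation is strongly continuous, so \<open>y \<mapsto> \<pi>(t, y) v\<close> is norm
continuous. Hence for fixed \<open>x\<close> and \<open>v\<close> the vector \<open>[\<psi>(t, x), \<pi>(t, y)] v\<close> (or the
anticommutator) depends continuously on \<open>y\<close>; if it vanishes for all \<open>y \<noteq> x\<close>, it vanishes at
\<open>y = x\<close> too, because \<open>x\<close> is not an isolated point.\<close>

lemma isCont_zero_off_point:
  fixes F :: "'a::{perfect_space,metric_space} \<Rightarrow> 'b::real_normed_vector"
  assumes "isCont F x" and "\<And>y. y \<noteq> x \<Longrightarrow> F y = 0"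
  shows "F x = 0"
proof -
  have "\<forall>\<^sub>F y in at x. F y = 0"
    using assms(2) by (simp add: eventually_at_filter)
  then have "(F \<longlongrightarrow> 0) (at x)"
    by (rule tendsto_eventually)
  with assms(1) show ?thesis
    unfolding isCont_def using tendsto_unique[OF at_neq_bot] by blast
qed

lemma off_diagonal_zero_iff_zero:
  fixes F :: "'a::{perfect_space,metric_space} \<Rightarrow> 'a \<Rightarrow> 'c \<Rightarrow> 'b::real_normed_vector"
  assumes "\<And>x v y0. isCont (\<lambda>y. F x y v) y0"
  shows "(\<forall>x y. x \<noteq> y \<longrightarrow> F x y = (\<lambda>v. 0)) \<longleftrightarrow> (\<forall>x y. F x y = (\<lambda>v. 0))"
proof (intro iffI allI ext)
  fix x y v
  assume off_diagonal: "\<forall>x y. x \<noteq> y \<longrightarrow> F x y = (\<lambda>v. 0)"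
  show "F x y v = 0"
  proof (cases "x = y")
    case True
    have "F x x v = 0"
      by (rule isCont_zero_off_point[OF assms]) (use off_diagonal in force)
    with True show ?thesis by simp
  qed (use off_diagonal in simp)
qed simp

lemma adjoint_op_eqI:
  fixes A B :: "'h::real_inner \<Rightarrow> 'h"
  assumes "\<And>x y. inner (A x) y = inner x (B y)"
  shows "adjoint_op A = B"
  unfolding adjoint_op_def
proof (rule the_equality)
  show "\<forall>x y. inner (A x) y = inner x (B y)" using assms by blast
  fix B' assume B': "\<forall>x y. inner (A x) y = inner x (B' y)"
  show "B' = B"
  proof
    fix y
    have "inner x (B' y - B y) = 0" for x
      using B' assms by (simp add: inner_diff_right)
    then show "B' y = B y" by (metis inner_eq_zero_iff eq_iff_diff_eq_0)
  qed
qed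

context
  fixes J :: "'h::real_inner \<Rightarrow> 'h" and U :: "'v::ab_group_add \<Rightarrow> 'h \<Rightarrow> 'h"
  assumes rep: "unitary_rep J U"
begin

lemma unitary_rep_inner: "inner (U y a) (U y b) = inner a b"
  using rep unfolding unitary_rep_def unitary_op_def by blast

lemma unitary_rep_norm: "norm (U y a) = norm a"
  unfolding norm_eq_sqrt_inner by (simp add: unitary_rep_inner)

lemma unitary_rep_linear: "linear (U y)"
  using rep unfolding unitary_rep_def unitary_op_def bounded_op_def
  by (blast intro: bounded_linear.linear)

lemma unitary_rep_apply_minus: "U y (U (- y) z) = z"
proof -
  have "U (y + - y) = U y \<circ> U (- y)" and "U 0 = id"
    using rep unfolding unitary_rep_def by blast+
  then show ?thesis by (metis comp_apply id_apply add.right_inverse)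
qed

lemma adjoint_op_unitary_rep: "adjoint_op (U y) = U (- y)"
proof (rule adjoint_op_eqI)
  fix a b
  have "inner (U y a) b = inner (U y a) (U y (U (- y) b))"
    by (simp add: unitary_rep_apply_minus)
  also have "\<dots> = inner a (U (- y) b)"
    by (rule unitary_rep_inner)
  finally show "inner (U y a) b = inner a (U (- y) b)" .
qed

end

context
  fixes J :: "'h::real_inner \<Rightarrow> 'h" and U :: "'v::real_normed_vector \<Rightarrow> 'h \<Rightarrow> 'h"
  assumes rep: "unitary_rep J U" and weak: "weakly_continuous U"
begin

lemma unitary_rep_strongly_continuous: "isCont (\<lambda>y. U y w) y0"
proof -
  let ?w0 = "U y0 w"
  \<comment> \<open>Since \<open>U\<close> is isometric, the distance to \<open>U y0 w\<close> is a function of a matrix element.\<close>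
  have dist_eq: "norm (U y w - ?w0) = sqrt (2 * inner w w - 2 * inner ?w0 (U y w))" for y
  proof -
    have "(norm (U y w - ?w0))\<^sup>2 = inner (U y w) (U y w) - 2 * inner ?w0 (U y w) + inner ?w0 ?w0"
      by (simp add: power2_norm_eq_inner inner_diff_left inner_diff_right inner_commute)
    also have "\<dots> = 2 * inner w w - 2 * inner ?w0 (U y w)"
      by (simp add: unitary_rep_inner[OF rep])
    finally show ?thesis by (metis norm_ge_zero real_sqrt_unique)
  qed
  have "isCont (\<lambda>y. inner ?w0 (U y w)) y0"
    using weak unfolding weakly_continuous_def by (simp add: continuous_on_eq_continuous_at)
  then have "((\<lambda>y. sqrt (2 * inner w w - 2 * inner ?w0 (U y w)))
      \<longlongrightarrow> sqrt (2 * inner w w - 2 * inner ?w0 ?w0)) (at y0)"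
    unfolding isCont_def by (intro tendsto_real_sqrt tendsto_diff tendsto_mult tendsto_const)
  then have "((\<lambda>y. norm (U y w - ?w0)) \<longlongrightarrow> 0) (at y0)"
    unfolding dist_eq by (simp add: unitary_rep_inner[OF rep])
  then have "((\<lambda>y. U y w - ?w0) \<longlongrightarrow> 0) (at y0)"
    by (rule tendsto_norm_zero_cancel)
  then show ?thesis
    unfolding isCont_def by (rule LIM_zero_cancel)
qed

lemma isCont_unitary_rep_apply:
  assumes "isCont g y0"
  shows "isCont (\<lambda>y. U y (g y)) y0"
proof -
  have "((\<lambda>y. norm (g y - g y0)) \<longlongrightarrow> 0) (at y0)"
    using assms unfolding isCont_def by (rule tendsto_norm_zero[OF LIM_zero])
  then have "((\<lambda>y. U y (g y - g y0)) \<longlongrightarrow> 0) (at y0)"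
    using tendsto_norm_zero_cancel[of "\<lambda>y. U y (g y - g y0)"]
    by (simp add: unitary_rep_norm[OF rep])
  moreover have "((\<lambda>y. U y (g y0)) \<longlongrightarrow> U y0 (g y0)) (at y0)"
    using unitary_rep_strongly_continuous unfolding isCont_def .
  ultimately have "((\<lambda>y. U y (g y - g y0) + U y (g y0)) \<longlongrightarrow> 0 + U y0 (g y0)) (at y0)"
    by (rule tendsto_add)
  then show ?thesis
    unfolding isCont_def by (simp add: linear_diff[OF unitary_rep_linear[OF rep]])
qed

lemma isCont_covariant_field:
  fixes A :: "'v \<Rightarrow> 'h \<Rightarrow> 'h"
  assumes covariant: "\<And>x y. U y \<circ> A x \<circ> adjoint_op (U y) = A (x + y)"
    and "bounded_linear (A 0)"
  shows "isCont (\<lambda>y. A y w) y0"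
proof -
  have A_eq: "A y w = U y (A 0 (U (- y) w))" for y
    using covariant[where x = 0 and y = y] by (auto simp: adjoint_op_unitary_rep[OF rep] fun_eq_iff)
  have "isCont (\<lambda>y::'v. - y) y0"
    by (intro continuous_intros)
  then have "isCont (\<lambda>y. U (- y) w) y0"
    using isCont_o2[OF _ unitary_rep_strongly_continuous] by blast
  then have "isCont (\<lambda>y. A 0 (U (- y) w)) y0"
    using isCont_o2[OF _ linear_continuous_at[OF assms(2)]] by blast
  then show ?thesis
    unfolding A_eq by (rule isCont_unitary_rep_apply)
qed

end

theorem corollary1:
  fixes J :: "'h::{real_inner, complete_space} \<Rightarrow> 'h"
    and U :: "real^'n \<Rightarrow> 'h \<Rightarrow> 'h"
    and psi pi :: "real \<Rightarrow> real^'n \<Rightarrow> 'h \<Rightarrow> 'h"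
  assumes "complex_structure J"
    and "unitary_rep J U"
    and "\<forall>t x. bounded_op J (psi t x)"
    and "\<forall>t x. bounded_op J (pi t x)"
    and "weakly_continuous U"
    and "\<forall>t x y. U y \<circ> pi t x \<circ> adjoint_op (U y) = pi t (x + y)"
  shows "\<forall>t.
    ((\<forall>x y. x \<noteq> y \<longrightarrow> commutator (psi t x) (pi t y) = (\<lambda>v. 0))
       \<longleftrightarrow> (\<forall>x y. commutator (psi t x) (pi t y) = (\<lambda>v. 0)))
  \<and> ((\<forall>x y. x \<noteq> y \<longrightarrow> anticommutator (psi t x) (pi t y) = (\<lambda>v. 0))
       \<longleftrightarrow> (\<forall>x y. anticommutator (psi t x) (pi t y) = (\<lambda>v. 0)))"
proof (intro allI conjI)
  fix t
  have pi_cont: "isCont (\<lambda>y. pi t y w) y0" for w y0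
    using isCont_covariant_field[OF assms(2,5)] assms(4,6) unfolding bounded_op_def by blast
  have psi_pi_cont: "isCont (\<lambda>y. psi t x (pi t y w)) y0" for x w y0
    using assms(3) unfolding bounded_op_def
    by (blast intro: isCont_o2[OF pi_cont linear_continuous_at])
  show "(\<forall>x y. x \<noteq> y \<longrightarrow> commutator (psi t x) (pi t y) = (\<lambda>v. 0))
      \<longleftrightarrow> (\<forall>x y. commutator (psi t x) (pi t y) = (\<lambda>v. 0))"
    by (rule off_diagonal_zero_iff_zero)
      (simp add: commutator_def isCont_diff[OF psi_pi_cont pi_cont])
  show "(\<forall>x y. x \<noteq> y \<longrightarrow> anticommutator (psi t x) (pi t y) = (\<lambda>v. 0))
      \<longleftrightarrow> (\<forall>x y. anticommutator (psi t x) (pi t y) = (\<lambda>v. 0))"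
    by (rule off_diagonal_zero_iff_zero)
      (simp add: anticommutator_def isCont_add[OF psi_pi_cont pi_cont])
qed

end
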